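(* Consider the noisy urn process $(A_t,B_t)_{t\in\mathbb{N}}$ described in the context with $\kappa=1$ almost surely (the leaky urn), started at $(A_1,B_1)=(1,0)$, and let $\tau:=\min\{t>1:|A_t|+|B_t|=1\}$ (the time to absorption of the leaky urn). Then $\mathbb{E}[\tau]=\infty$.
   Context: Noisy urn with a $\mathbb{Z}$-valued $\kappa$ (here $\kappa\equiv1$), $\kappa_t$ i.i.d. copies, $\mathrm{sgn}(x)=x/|x|$: a Markov chain on $\mathbb{Z}^2\setminus\{(0,0)\}$. If $A_tB_t\ne0$: from $(a,b)$ it moves to $(a,b+\mathrm{sgn}(a))$ with probability $|a|/(|a|+|b|)$ and to $(a-\mathrm{sgn}(b),b)$ with probability $|b|/(|a|+|b|)$. If $A_t\ne0,B_t=0$: $(A_{t+1},B_{t+1})=(\mathrm{sgn}(A_t)\max\{1,|A_t|-\kappa_t\},\mathrm{sgn}(A_t))$. If $A_t=0,B_t\ne0$: $(A_{t+1},B_{t+1})=(-\mathrm{sgn}(B_t),\mathrm{sgn}(B_t)\max\{1,|B_t|-\kappa_t\})$. *)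

theory Defs
  imports "HOL-Probability.Probability"
begin

text \<open>One step of the noisy urn with a given (here deterministic) value k of kappa_t.
  The randomness of the step in the case a b \<noteq> 0 is realised by a driving
  variable u, uniform on [0,1]: with probability |a|/(|a|+|b|) (namely u < |a|/(|a|+|b|))
  move to (a, b + sgn a), otherwise to (a - sgn b, b).\<close>
definition urn_step :: "int \<Rightarrow> int \<times> int \<Rightarrow> real \<Rightarrow> int \<times> int" where
  "urn_step k p u = (case p of (a, b) \<Rightarrow>
     if a \<noteq> 0 \<and> b \<noteq> 0 then
       (if u < real_of_int \<bar>a\<bar> / real_of_int (\<bar>a\<bar> + \<bar>b\<bar>) then (a, b + sgn a) else (a - sgn b, b))
     else if a \<noteq> 0 \<and> b = 0 then (sgn a * max 1 (\<bar>a\<bar> - k), sgn a)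
     else if a = 0 \<and> b \<noteq> 0 then (- sgn b, sgn b * max 1 (\<bar>b\<bar> - k))
     else (0, 0))"

definition noise_space :: "(nat \<Rightarrow> real) measure" where
  "noise_space = PiM UNIV (\<lambda>_. uniform_measure lborel {0..1})"

text \<open>The value at t = 0 is an unused dummy.\<close>
primrec leaky_urn :: "(nat \<Rightarrow> real) \<Rightarrow> nat \<Rightarrow> int \<times> int" where
  "leaky_urn \<omega> 0 = (1, 0)"
| "leaky_urn \<omega> (Suc n) = (if n = 0 then (1, 0) else urn_step 1 (leaky_urn \<omega> n) (\<omega> n))"

definition absorption_time :: "(nat \<Rightarrow> real) \<Rightarrow> ennreal" where
  "absorption_time \<omega> =
     (if \<exists>t>1. \<bar>fst (leaky_urn \<omega> t)\<bar> + \<bar>snd (leaky_urn \<omega> t)\<bar> = 1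
      then of_nat (LEAST t. t > 1 \<and> \<bar>fst (leaky_urn \<omega> t)\<bar> + \<bar>snd (leaky_urn \<omega> t)\<bar> = 1)
      else \<infinity>)"

end

theory Submission
  imports Defs
begin

text \<open>Off the four absorbing states the function \<open>G = urn_harmonic\<close> is harmonic for the urn, and it
  vanishes on them. Hence for the chain killed at absorption, \<open>E[G(X\<^sub>n); no absorption] = G(X\<^sub>0)\<close>,
  while \<open>E[G(X\<^sub>n)\<^sup>2; no absorption] \<le> G(X\<^sub>0)\<^sup>2 + 4 n G(X\<^sub>0)\<close>, because a step changes \<open>G\<close>
  by \<open>\<plusminus>2|a|\<close> or \<open>\<plusminus>2|b|\<close> and \<open>|a||b| \<le> G(a, b)\<close>. Cauchy-Schwarz then bounds the
  probability of no absorption by time \<open>n\<close> from below by \<open>G(X\<^sub>0) / (G(X\<^sub>0) + 4n)\<close>. The leaky urn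
  is at \<open>(1, 1)\<close> at time 2, where this is \<open>1 / (1 + 2n)\<close>, and these bounds sum to \<open>\<infinity>\<close>.\<close>

lemma (in prob_space) nn_integral_PiM_case_nat:
  assumes [measurable]: "f \<in> borel_measurable (PiM UNIV (\<lambda>_::nat. M))"
  shows "(\<integral>\<^sup>+\<omega>. f \<omega> \<partial>PiM UNIV (\<lambda>_. M)) =
    (\<integral>\<^sup>+x. (\<integral>\<^sup>+\<omega>. f (case_nat x \<omega>) \<partial>PiM UNIV (\<lambda>_. M)) \<partial>M)"
proof -
  interpret S: sequence_space M ..
  interpret P: pair_sigma_finite M S.S ..
  have "(\<integral>\<^sup>+\<omega>. f \<omega> \<partial>S.S) = (\<integral>\<^sup>+X. f ((\<lambda>(s, \<omega>). case_nat s \<omega>) X) \<partial>(M \<Otimes>\<^sub>M S.S))"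
    by (subst S.PiM_iter[symmetric]) (simp add: nn_integral_distr)
  also have "\<dots> = (\<integral>\<^sup>+x. \<integral>\<^sup>+\<omega>. f ((\<lambda>(s, \<omega>). case_nat s \<omega>) (x, \<omega>)) \<partial>S.S \<partial>M)"
  proof (subst S.nn_integral_fst)
    have "(\<lambda>X. case_nat (fst X) (snd X)) \<in> measurable (M \<Otimes>\<^sub>M S.S) S.S"
      by measurable
    from measurable_compose[OF this assms]
    show "(\<lambda>X. f ((\<lambda>(s, \<omega>). case_nat s \<omega>) X)) \<in> borel_measurable (M \<Otimes>\<^sub>M S.S)"
      by (simp add: split_beta')
  qed simp
  finally show ?thesis by simp
qed

lemma measurable_shift_PiM:
  "(\<lambda>\<omega>. \<lambda>n. \<omega> (Suc n)) \<in> measurable (PiM UNIV (\<lambda>_::nat. M)) (PiM UNIV (\<lambda>_. M))"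
  by (rule measurable_PiM_single') (auto simp: space_PiM PiE_iff)

lemma (in prob_space) nn_integral_PiM_shift:
  assumes [measurable]: "f \<in> borel_measurable (PiM UNIV (\<lambda>_::nat. M))"
  shows "(\<integral>\<^sup>+\<omega>. f (\<lambda>n. \<omega> (Suc n)) \<partial>PiM UNIV (\<lambda>_. M)) = (\<integral>\<^sup>+\<omega>. f \<omega> \<partial>PiM UNIV (\<lambda>_. M))"
proof -
  have "(\<lambda>\<omega>. f (\<lambda>n. \<omega> (Suc n))) \<in> borel_measurable (PiM UNIV (\<lambda>_. M))"
    by (rule measurable_compose[OF measurable_shift_PiM assms])
  then have "(\<integral>\<^sup>+\<omega>. f (\<lambda>n. \<omega> (Suc n)) \<partial>PiM UNIV (\<lambda>_. M)) =
      (\<integral>\<^sup>+x. (\<integral>\<^sup>+\<omega>. f (\<lambda>n. case_nat x \<omega> (Suc n)) \<partial>PiM UNIV (\<lambda>_. M)) \<partial>M)"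
    by (rule nn_integral_PiM_case_nat)
  also have "\<dots> = (\<integral>\<^sup>+x. (\<integral>\<^sup>+\<omega>. f \<omega> \<partial>PiM UNIV (\<lambda>_. M)) \<partial>M)"
    by simp
  finally show ?thesis by (simp add: emeasure_space_1)
qed

abbreviation uniform01 :: "real measure" where
  "uniform01 \<equiv> uniform_measure lborel {0..1}"

interpretation uniform01: prob_space uniform01
  by (rule prob_space_uniform_measure) auto

lemma emeasure_uniform01_lessThan:
  assumes "0 \<le> c" "c \<le> 1"
  shows "emeasure uniform01 {..<c} = ennreal c"
proof -
  have "emeasure uniform01 {..<c} = emeasure lborel ({0..1} \<inter> {..<c}) / emeasure lborel {0..1::real}"
    by (rule emeasure_uniform_measure) auto
  also have "{0..1} \<inter> {..<c} = {0..<c}" using assms by auto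
  finally show ?thesis using assms by (simp add: divide_ennreal_def)
qed

lemma emeasure_uniform01_atLeast:
  assumes "0 \<le> c" "c \<le> 1"
  shows "emeasure uniform01 {c..} = ennreal (1 - c)"
proof -
  have "emeasure uniform01 {c..} = emeasure lborel ({0..1} \<inter> {c..}) / emeasure lborel {0..1::real}"
    by (rule emeasure_uniform_measure) auto
  also have "{0..1} \<inter> {c..} = {c..1}" using assms by auto
  finally show ?thesis using assms by (simp add: divide_ennreal_def)
qed

lemma measurable_urn_step [measurable]:
  "urn_step k s \<in> measurable borel (count_space UNIV)"
  unfolding urn_step_def by (cases s) simp

interpretation noise_space: prob_space noise_space
  unfolding noise_space_def by (rule prob_space_PiM) (rule uniform01.prob_space_axioms)

lemma measurable_noise_shift:
  "(\<lambda>\<omega> n. \<omega> (Suc n)) \<in> measurable noise_space noise_space"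
  unfolding noise_space_def by (rule measurable_shift_PiM)

lemma nn_integral_noise_space_shift:
  assumes "f \<in> borel_measurable noise_space"
  shows "(\<integral>\<^sup>+\<omega>. f (\<lambda>n. \<omega> (Suc n)) \<partial>noise_space) = (\<integral>\<^sup>+\<omega>. f \<omega> \<partial>noise_space)"
  using uniform01.nn_integral_PiM_shift assms unfolding noise_space_def by blast

lemma measurable_noise_coordinate [measurable]:
  "(\<lambda>\<omega>. \<omega> n) \<in> borel_measurable noise_space"
  unfolding noise_space_def by measurable

definition absorbed :: "int \<times> int \<Rightarrow> bool" where
  "absorbed s \<longleftrightarrow> \<bar>fst s\<bar> + \<bar>snd s\<bar> = 1"

text \<open>The path consumes the noise from the front, so that its first step matches the splitting
  of the product measure along its first factor.\<close>
fun urn_path :: "int \<times> int \<Rightarrow> (nat \<Rightarrow> real) \<Rightarrow> nat \<Rightarrow> int \<times> int" where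
  "urn_path s \<omega> 0 = s"
| "urn_path s \<omega> (Suc n) = urn_path (urn_step 1 s (\<omega> 0)) (\<lambda>k. \<omega> (Suc k)) n"

lemma urn_path_Suc_right: "urn_path s \<omega> (Suc n) = urn_step 1 (urn_path s \<omega> n) (\<omega> n)"
proof (induction n arbitrary: s \<omega>)
  case (Suc n)
  have "urn_path s \<omega> (Suc (Suc n)) = urn_path (urn_step 1 s (\<omega> 0)) (\<lambda>k. \<omega> (Suc k)) (Suc n)"
    by (simp only: urn_path.simps)
  also have "\<dots> = urn_step 1 (urn_path (urn_step 1 s (\<omega> 0)) (\<lambda>k. \<omega> (Suc k)) n) (\<omega> (Suc n))"
    by (rule Suc.IH)
  also have "\<dots> = urn_step 1 (urn_path s \<omega> (Suc n)) (\<omega> (Suc n))"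
    by (simp only: urn_path.simps)
  finally show ?case .
qed simp

lemma leaky_urn_eq_urn_path:
  "leaky_urn \<omega> (Suc (Suc n)) = urn_path (1, 1) (\<lambda>j. \<omega> (Suc (Suc j))) n"
proof (induction n)
  case 0
  show ?case by (simp add: urn_step_def)
next
  case (Suc n)
  have "leaky_urn \<omega> (Suc (Suc (Suc n))) = urn_step 1 (leaky_urn \<omega> (Suc (Suc n))) (\<omega> (Suc (Suc n)))"
    by simp
  then show ?case by (simp only: Suc.IH urn_path_Suc_right)
qed

definition survival :: "int \<times> int \<Rightarrow> (nat \<Rightarrow> real) \<Rightarrow> nat \<Rightarrow> ennreal" where
  "survival s \<omega> n = (if \<forall>k\<le>n. \<not> absorbed (urn_path s \<omega> k) then 1 else 0)"

lemma survival_0: "survival s \<omega> 0 = (if absorbed s then 0 else 1)"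
  by (simp add: survival_def)

lemma survival_Suc:
  "survival s \<omega> (Suc n) =
    (if absorbed s then 0 else survival (urn_step 1 s (\<omega> 0)) (\<lambda>k. \<omega> (Suc k)) n)"
  unfolding survival_def less_Suc_eq_le[symmetric] All_less_Suc2 by simp

lemma measurable_survival [measurable]:
  "(\<lambda>\<omega>. survival s \<omega> n) \<in> borel_measurable noise_space"
proof (induction n arbitrary: s)
  case 0
  show ?case by (simp add: survival_0)
next
  case (Suc n)
  have shifted: "(\<lambda>\<omega>. survival t (\<lambda>k. \<omega> (Suc k)) n) \<in> borel_measurable noise_space" for t
    using measurable_compose[OF measurable_noise_shift Suc.IH[of t]] .
  have "(\<lambda>\<omega>. urn_step 1 s (\<omega> 0)) \<in> measurable noise_space (count_space UNIV)"
    by measurable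
  from measurable_compose_countable'[OF shifted this]
  show ?case by (simp add: survival_Suc)
qed

definition step_mean :: "(int \<times> int \<Rightarrow> real) \<Rightarrow> int \<times> int \<Rightarrow> real" where
  "step_mean g s = (case s of (a, b) \<Rightarrow>
     if a \<noteq> 0 \<and> b \<noteq> 0
     then (\<bar>a\<bar> * g (a, b + sgn a) + \<bar>b\<bar> * g (a - sgn b, b)) / (\<bar>a\<bar> + \<bar>b\<bar>)
     else g (urn_step 1 s 0))"

lemma step_mean_interior_eq_iff:
  assumes "a \<noteq> 0" "b \<noteq> 0"
  shows "step_mean g (a, b) = c \<longleftrightarrow>
    \<bar>a\<bar> * g (a, b + sgn a) + \<bar>b\<bar> * g (a - sgn b, b) = c * (\<bar>a\<bar> + \<bar>b\<bar>)"
proof -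
  have "real_of_int \<bar>a\<bar> + \<bar>b\<bar> > 0" using assms by simp
  then show ?thesis using assms by (simp add: step_mean_def field_simps)
qed

lemma step_mean_axis: "\<not> (a \<noteq> 0 \<and> b \<noteq> 0) \<Longrightarrow> step_mean g (a, b) = g (urn_step 1 (a, b) 0)"
  by (auto simp: step_mean_def)

lemma step_mean_nonneg: "(\<And>t. 0 \<le> g t) \<Longrightarrow> 0 \<le> step_mean g s"
  by (auto simp: step_mean_def split: prod.splits)

lemma step_mean_mono: "(\<And>t. f t \<le> g t) \<Longrightarrow> step_mean f s \<le> step_mean g s"
  by (auto simp: step_mean_def split: prod.splits intro!: divide_right_mono add_mono mult_left_mono)

lemma step_mean_linear:
  "step_mean (\<lambda>t. \<alpha> * f t + \<beta> * g t) s = \<alpha> * step_mean f s + \<beta> * step_mean g s"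
  by (cases s) (simp add: step_mean_def add_divide_distrib algebra_simps)

lemma nn_integral_urn_step:
  assumes g: "\<And>t. 0 \<le> g t"
  shows "(\<integral>\<^sup>+u. ennreal (g (urn_step 1 s u)) \<partial>uniform01) = ennreal (step_mean g s)"
proof (cases s)
  case (Pair a b)
  show ?thesis
  proof (cases "a \<noteq> 0 \<and> b \<noteq> 0")
    case True
    define x where "x = \<bar>real_of_int a\<bar>"
    define y where "y = \<bar>real_of_int b\<bar>"
    have xy: "0 < x" "0 < y" using True by (auto simp: x_def y_def)
    define c where "c = x / (x + y)"
    have c: "0 \<le> c" "c \<le> 1" using xy by (auto simp: c_def)
    have step: "ennreal (g (urn_step 1 s u)) =
      ennreal (g (a, b + sgn a)) * indicator {..<c} u + ennreal (g (a - sgn b, b)) * indicator {c..} u" for u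
      using True by (auto simp: Pair urn_step_def c_def x_def y_def split: split_indicator)
    have "(\<integral>\<^sup>+u. ennreal (g (urn_step 1 s u)) \<partial>uniform01) =
        (\<integral>\<^sup>+u. ennreal (g (a, b + sgn a)) * indicator {..<c} u \<partial>uniform01) +
        (\<integral>\<^sup>+u. ennreal (g (a - sgn b, b)) * indicator {c..} u \<partial>uniform01)"
      unfolding step by (rule nn_integral_add)
        (intro borel_measurable_times_ennreal borel_measurable_const borel_measurable_indicator; simp)+
    also have "\<dots> = ennreal (g (a, b + sgn a)) * ennreal c + ennreal (g (a - sgn b, b)) * ennreal (1 - c)"
      by (simp add: nn_integral_cmult_indicator emeasure_uniform01_lessThan[OF c]
          emeasure_uniform01_atLeast[OF c] del: emeasure_uniform_measure)
    also have "\<dots> = ennreal (c * g (a, b + sgn a) + (1 - c) * g (a - sgn b, b))"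
      using c g by (simp add: ennreal_mult' ennreal_plus mult.commute)
    also have "c * g (a, b + sgn a) + (1 - c) * g (a - sgn b, b) = step_mean g s"
    proof -
      have "c * (x + y) = x" "(1 - c) * (x + y) = y" using xy by (simp_all add: c_def field_simps)
      then have "x * g (a, b + sgn a) + y * g (a - sgn b, b) =
          (c * g (a, b + sgn a) + (1 - c) * g (a - sgn b, b)) * (x + y)"
        by (metis distrib_right mult.assoc mult.commute)
      then have "step_mean g s = c * g (a, b + sgn a) + (1 - c) * g (a - sgn b, b)"
        using True by (simp add: Pair step_mean_interior_eq_iff x_def y_def)
      then show ?thesis ..
    qed
    finally show ?thesis .
  next
    case False
    then have "urn_step 1 s u = urn_step 1 s 0" for u by (auto simp: Pair urn_step_def)
    then have "(\<integral>\<^sup>+u. ennreal (g (urn_step 1 s u)) \<partial>uniform01) =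
        (\<integral>\<^sup>+u. ennreal (g (urn_step 1 s 0)) \<partial>uniform01)"
      by (intro nn_integral_cong) metis
    then have "(\<integral>\<^sup>+u. ennreal (g (urn_step 1 s u)) \<partial>uniform01) = ennreal (g (urn_step 1 s 0))"
      by (simp add: uniform01.emeasure_space_1)
    then show ?thesis
      using False by (simp add: Pair step_mean_axis)
  qed
qed

text \<open>\<open>killed_mean \<phi> n s\<close> is the expectation of \<open>\<phi>(X\<^sub>n)\<close> on the event that the urn started
  at \<open>X\<^sub>0 = s\<close> is not absorbed by time \<open>n\<close>.\<close>
fun killed_mean :: "(int \<times> int \<Rightarrow> real) \<Rightarrow> nat \<Rightarrow> int \<times> int \<Rightarrow> real" where
  "killed_mean \<phi> 0 s = (if absorbed s then 0 else \<phi> s)"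
| "killed_mean \<phi> (Suc n) s = (if absorbed s then 0 else step_mean (killed_mean \<phi> n) s)"

lemma killed_mean_nonneg: "(\<And>t. 0 \<le> \<phi> t) \<Longrightarrow> 0 \<le> killed_mean \<phi> n s"
  by (induction n arbitrary: s) (auto intro!: step_mean_nonneg)

lemma killed_mean_mono: "(\<And>t. \<phi> t \<le> \<psi> t) \<Longrightarrow> killed_mean \<phi> n s \<le> killed_mean \<psi> n s"
  by (induction n arbitrary: s) (auto intro!: step_mean_mono)

lemma killed_mean_linear:
  "killed_mean (\<lambda>t. \<alpha> * \<phi> t + \<beta> * \<psi> t) n s = \<alpha> * killed_mean \<phi> n s + \<beta> * killed_mean \<psi> n s"
proof (induction n arbitrary: s)
  case (Suc n)
  have "killed_mean (\<lambda>t. \<alpha> * \<phi> t + \<beta> * \<psi> t) n = (\<lambda>t. \<alpha> * killed_mean \<phi> n t + \<beta> * killed_mean \<psi> n t)"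
    using Suc.IH by (intro ext)
  then show ?case by (simp add: step_mean_linear)
qed simp

lemma nn_integral_survival:
  "(\<integral>\<^sup>+\<omega>. survival s \<omega> n \<partial>noise_space) = ennreal (killed_mean (\<lambda>_. 1) n s)"
proof (induction n arbitrary: s)
  case 0
  show ?case
    by (simp add: survival_0 noise_space.emeasure_space_1)
next
  case (Suc n)
  have "(\<integral>\<^sup>+\<omega>. survival s \<omega> (Suc n) \<partial>noise_space) =
      (\<integral>\<^sup>+u. (\<integral>\<^sup>+\<omega>. survival s (case_nat u \<omega>) (Suc n) \<partial>noise_space) \<partial>uniform01)"
    using uniform01.nn_integral_PiM_case_nat measurable_survival unfolding noise_space_def by blast
  also have "\<dots> = (\<integral>\<^sup>+u. (if absorbed s then 0 else ennreal (killed_mean (\<lambda>_. 1) n (urn_step 1 s u))) \<partial>uniform01)"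
  proof -
    have "survival s (case_nat u \<omega>) (Suc n) =
        (if absorbed s then 0 else survival (urn_step 1 s u) \<omega> n)" for u \<omega>
      by (simp add: survival_Suc)
    then show ?thesis by (cases "absorbed s") (simp_all add: Suc.IH)
  qed
  also have "\<dots> = ennreal (killed_mean (\<lambda>_. 1) (Suc n) s)"
    by (simp add: nn_integral_urn_step killed_mean_nonneg)
  finally show ?case .
qed

lemma abs_le_power2_int: "\<bar>z\<bar> \<le> (z::int)\<^sup>2"
proof (cases "z = 0")
  case False
  then have "\<bar>z\<bar> * 1 \<le> \<bar>z\<bar> * \<bar>z\<bar>" by (intro mult_left_mono) auto
  then show ?thesis by (simp add: power2_eq_square abs_mult_self_eq)
qed simp

text \<open>In an open quadrant the sign of the linear term makes the two possible moves change \<open>G\<close> by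
  \<open>+2|b|\<close> and \<open>-2|a|\<close> (or the reverse), which cancel in mean with weights \<open>|a|\<close> and \<open>|b|\<close>; on the
  axes, the term \<open>-|a| - |b|\<close> makes the deterministic leaky move preserve \<open>G\<close>.\<close>
definition urn_harmonic :: "int \<times> int \<Rightarrow> real" where
  "urn_harmonic s = (case s of (a, b) \<Rightarrow> of_int (a\<^sup>2 + b\<^sup>2 +
     (if a \<noteq> 0 \<and> b \<noteq> 0 then sgn (a * b) * (\<bar>a\<bar> - \<bar>b\<bar>) else - \<bar>a\<bar> - \<bar>b\<bar>)))"

text \<open>Each quadrant formula extends to the adjacent half-axes, so moves that land on an axis need no
  separate treatment.\<close>
lemma urn_harmonic_nonneg_pos: "0 \<le> a \<Longrightarrow> 0 < b \<Longrightarrow> urn_harmonic (a, b) = of_int (a\<^sup>2 + b\<^sup>2 + a - b)"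
  by (cases "a = 0") (auto simp: urn_harmonic_def sgn_mult)

lemma urn_harmonic_nonpos_neg: "a \<le> 0 \<Longrightarrow> b < 0 \<Longrightarrow> urn_harmonic (a, b) = of_int (a\<^sup>2 + b\<^sup>2 - a + b)"
  by (cases "a = 0") (auto simp: urn_harmonic_def sgn_mult)

lemma urn_harmonic_pos_nonpos: "0 < a \<Longrightarrow> b \<le> 0 \<Longrightarrow> urn_harmonic (a, b) = of_int (a\<^sup>2 + b\<^sup>2 - a - b)"
  by (cases "b = 0") (auto simp: urn_harmonic_def sgn_mult)

lemma urn_harmonic_neg_nonneg: "a < 0 \<Longrightarrow> 0 \<le> b \<Longrightarrow> urn_harmonic (a, b) = of_int (a\<^sup>2 + b\<^sup>2 + a + b)"
  by (cases "b = 0") (auto simp: urn_harmonic_def sgn_mult)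

lemma urn_harmonic_moves:
  assumes "a \<noteq> 0" "b \<noteq> 0"
  shows "urn_harmonic (a, b + sgn a) = urn_harmonic (a, b) + 2 * sgn (a * b) * \<bar>b\<bar>"
    and "urn_harmonic (a - sgn b, b) = urn_harmonic (a, b) - 2 * sgn (a * b) * \<bar>a\<bar>"
  using assms
  by (cases "0 < a"; cases "0 < b"; simp add: sgn_mult urn_harmonic_nonneg_pos urn_harmonic_nonpos_neg
      urn_harmonic_pos_nonpos urn_harmonic_neg_nonneg power2_eq_square algebra_simps)+

lemma urn_harmonic_axis:
  assumes "\<not> (a \<noteq> 0 \<and> b \<noteq> 0)" "\<not> absorbed (a, b)"
  shows "urn_harmonic (urn_step 1 (a, b) 0) = urn_harmonic (a, b)"
proof -
  have "a = 0 \<or> b = 0" "\<bar>a\<bar> + \<bar>b\<bar> \<noteq> 1" using assms by (auto simp: absorbed_def)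
  then consider "a = 0" "b = 0" | "b = 0" "a \<ge> 2" | "b = 0" "a \<le> -2" | "a = 0" "b \<ge> 2" | "a = 0" "b \<le> -2"
    by linarith
  then show ?thesis
  proof cases
    case 1
    then show ?thesis by (simp add: urn_step_def)
  next
    case 2
    then have "urn_step 1 (a, b) 0 = (a - 1, 1)" by (simp add: urn_step_def max_def)
    then show ?thesis
      using 2 by (simp add: urn_harmonic_nonneg_pos urn_harmonic_pos_nonpos power2_eq_square algebra_simps)
  next
    case 3
    then have "urn_step 1 (a, b) 0 = (a + 1, -1)" by (simp add: urn_step_def max_def)
    then show ?thesis
      using 3 by (simp add: urn_harmonic_nonpos_neg urn_harmonic_neg_nonneg power2_eq_square algebra_simps)
  next
    case 4
    then have "urn_step 1 (a, b) 0 = (-1, b - 1)" by (simp add: urn_step_def max_def)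
    then show ?thesis
      using 4 by (simp add: urn_harmonic_neg_nonneg urn_harmonic_nonneg_pos power2_eq_square algebra_simps)
  next
    case 5
    then have "urn_step 1 (a, b) 0 = (1, b + 1)" by (simp add: urn_step_def max_def)
    then show ?thesis
      using 5 by (simp add: urn_harmonic_pos_nonpos urn_harmonic_nonpos_neg power2_eq_square algebra_simps)
  qed
qed

lemma urn_harmonic_absorbed: "absorbed s \<Longrightarrow> urn_harmonic s = 0"
proof (cases s)
  case (Pair a b)
  assume "absorbed s"
  then have "(a = 0 \<and> (b = 1 \<or> b = -1)) \<or> (b = 0 \<and> (a = 1 \<or> a = -1))"
    by (auto simp: Pair absorbed_def abs_if split: if_splits)
  then show ?thesis by (auto simp: Pair urn_harmonic_def)
qed

lemma urn_harmonic_nonneg: "0 \<le> urn_harmonic s"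
proof (cases s)
  case (Pair a b)
  have "sgn (a * b) \<in> {-1, 0, 1}" by (simp add: sgn_if)
  then have "- \<bar>a\<bar> - \<bar>b\<bar> \<le> sgn (a * b) * (\<bar>a\<bar> - \<bar>b\<bar>)" by auto
  then have "0 \<le> a\<^sup>2 + b\<^sup>2 +
      (if a \<noteq> 0 \<and> b \<noteq> 0 then sgn (a * b) * (\<bar>a\<bar> - \<bar>b\<bar>) else - \<bar>a\<bar> - \<bar>b\<bar>)"
    using abs_le_power2_int[of a] abs_le_power2_int[of b] by (simp split: if_split)
  then show ?thesis unfolding urn_harmonic_def Pair by (simp only: case_prod_conv of_int_0_le_iff)
qed

lemma urn_harmonic_ge_mult:
  assumes "a \<noteq> 0" "b \<noteq> 0"
  shows "of_int (\<bar>a\<bar> * \<bar>b\<bar>) \<le> urn_harmonic (a, b)"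
proof -
  define x where "x = \<bar>a\<bar>"
  define y where "y = \<bar>b\<bar>"
  have xy: "1 \<le> x" "1 \<le> y" using assms by (auto simp: x_def y_def)
  have "sgn (a * b) = 1 \<or> sgn (a * b) = -1" using assms by (simp add: sgn_mult sgn_if)
  then have "x * y \<le> x\<^sup>2 + y\<^sup>2 + sgn (a * b) * (x - y)"
  proof
    assume "sgn (a * b) = 1"
    moreover have "0 \<le> (x - y)\<^sup>2 + y * (x - 1) + x" using xy by simp
    ultimately show ?thesis by (simp add: power2_eq_square algebra_simps)
  next
    assume "sgn (a * b) = -1"
    moreover have "0 \<le> (x - y)\<^sup>2 + x * (y - 1) + y" using xy by simp
    ultimately show ?thesis by (simp add: power2_eq_square algebra_simps)
  qed
  then have "\<bar>a\<bar> * \<bar>b\<bar> \<le> a\<^sup>2 + b\<^sup>2 + sgn (a * b) * (\<bar>a\<bar> - \<bar>b\<bar>)"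
    by (simp add: x_def y_def)
  moreover have "urn_harmonic (a, b) = of_int (a\<^sup>2 + b\<^sup>2 + sgn (a * b) * (\<bar>a\<bar> - \<bar>b\<bar>))"
    using assms by (simp add: urn_harmonic_def)
  ultimately show ?thesis by (simp only: of_int_le_iff)
qed

lemma step_mean_urn_harmonic: "\<not> absorbed s \<Longrightarrow> step_mean urn_harmonic s = urn_harmonic s"
proof (cases s)
  case (Pair a b)
  assume "\<not> absorbed s"
  show ?thesis
  proof (cases "a \<noteq> 0 \<and> b \<noteq> 0")
    case True
    then show ?thesis
      by (simp add: Pair step_mean_interior_eq_iff urn_harmonic_moves algebra_simps)
  next
    case False
    then show ?thesis using \<open>\<not> absorbed s\<close> by (simp add: Pair step_mean_axis urn_harmonic_axis)
  qed
qed

lemma step_mean_urn_harmonic_sq: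
  assumes "\<not> absorbed s"
  shows "step_mean (\<lambda>t. (urn_harmonic t)\<^sup>2) s \<le> (urn_harmonic s)\<^sup>2 + 4 * urn_harmonic s"
proof (cases s)
  case (Pair a b)
  show ?thesis
  proof (cases "a \<noteq> 0 \<and> b \<noteq> 0")
    case True
    define G where "G = urn_harmonic (a, b)"
    define e where "e = real_of_int (sgn (a * b))"
    define x where "x = \<bar>real_of_int a\<bar>"
    define y where "y = \<bar>real_of_int b\<bar>"
    have "e * e = 1" using True by (simp add: e_def sgn_mult sgn_if)
    then have "x * (G + 2 * e * y)\<^sup>2 + y * (G - 2 * e * x)\<^sup>2 = (G\<^sup>2 + 4 * (x * y)) * (x + y)"
      by (simp add: power2_eq_square algebra_simps) algebra
    then have "step_mean (\<lambda>t. (urn_harmonic t)\<^sup>2) (a, b) = G\<^sup>2 + 4 * (x * y)"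
      using True by (simp add: step_mean_interior_eq_iff urn_harmonic_moves G_def e_def x_def y_def)
    moreover have "x * y \<le> G"
      using urn_harmonic_ge_mult[OF conjunct1[OF True] conjunct2[OF True]] by (simp add: G_def x_def y_def)
    ultimately show ?thesis by (simp add: Pair G_def)
  next
    case False
    then show ?thesis using assms urn_harmonic_nonneg[of s] by (simp add: Pair step_mean_axis urn_harmonic_axis)
  qed
qed

lemma killed_mean_urn_harmonic: "killed_mean urn_harmonic n s = urn_harmonic s"
proof (induction n arbitrary: s)
  case 0
  show ?case by (simp add: urn_harmonic_absorbed)
next
  case (Suc n)
  then have "killed_mean urn_harmonic n = urn_harmonic" by (intro ext)
  then show ?case by (simp add: urn_harmonic_absorbed step_mean_urn_harmonic)
qed

lemma killed_mean_urn_harmonic_sq: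
  "killed_mean (\<lambda>t. (urn_harmonic t)\<^sup>2) n s \<le> (urn_harmonic s)\<^sup>2 + 4 * real n * urn_harmonic s"
proof (induction n arbitrary: s)
  case 0
  show ?case by (simp add: urn_harmonic_absorbed)
next
  case (Suc n)
  show ?case
  proof (cases "absorbed s")
    case True
    then show ?thesis by (simp add: urn_harmonic_absorbed)
  next
    case False
    have "killed_mean (\<lambda>t. (urn_harmonic t)\<^sup>2) (Suc n) s =
        step_mean (killed_mean (\<lambda>t. (urn_harmonic t)\<^sup>2) n) s"
      using False by simp
    also have "\<dots> \<le> step_mean (\<lambda>t. 1 * (urn_harmonic t)\<^sup>2 + (4 * real n) * urn_harmonic t) s"
      using Suc.IH by (intro step_mean_mono) simp
    also have "\<dots> = step_mean (\<lambda>t. (urn_harmonic t)\<^sup>2) s + 4 * real n * urn_harmonic s"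
      using False step_mean_linear[of 1 "\<lambda>t. (urn_harmonic t)\<^sup>2" "4 * real n" urn_harmonic s]
      by (simp add: step_mean_urn_harmonic)
    also have "\<dots> \<le> (urn_harmonic s)\<^sup>2 + 4 * real (Suc n) * urn_harmonic s"
      using step_mean_urn_harmonic_sq[OF False] by (simp add: algebra_simps)
    finally show ?thesis .
  qed
qed

lemma killed_mean_one_ge:
  "urn_harmonic s / (urn_harmonic s + 4 * real n) \<le> killed_mean (\<lambda>_. 1) n s"
proof (cases "urn_harmonic s = 0")
  case True
  then show ?thesis by (simp add: killed_mean_nonneg)
next
  case False
  define G where "G = urn_harmonic s"
  define c where "c = G + 4 * real n"
  have c: "0 < c" using False urn_harmonic_nonneg[of s] by (simp add: c_def G_def)
  have am_gm: "urn_harmonic t \<le> (1 / (2 * c)) * (urn_harmonic t)\<^sup>2 + (c / 2) * 1" for t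
  proof -
    have "2 * c * urn_harmonic t \<le> (urn_harmonic t)\<^sup>2 + c\<^sup>2"
      using sum_squares_ge_zero[of "urn_harmonic t - c" 0] by (simp add: power2_eq_square algebra_simps)
    then show ?thesis using c by (simp add: field_simps power2_eq_square)
  qed
  have "G = killed_mean urn_harmonic n s" by (simp add: G_def killed_mean_urn_harmonic)
  also have "\<dots> \<le> killed_mean (\<lambda>t. (1 / (2 * c)) * (urn_harmonic t)\<^sup>2 + (c / 2) * 1) n s"
    by (rule killed_mean_mono) (rule am_gm)
  also have "\<dots> = (1 / (2 * c)) * killed_mean (\<lambda>t. (urn_harmonic t)\<^sup>2) n s + (c / 2) * killed_mean (\<lambda>_. 1) n s"
    by (rule killed_mean_linear)
  also have "\<dots> \<le> (1 / (2 * c)) * (G\<^sup>2 + 4 * real n * G) + (c / 2) * killed_mean (\<lambda>_. 1) n s"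
    using killed_mean_urn_harmonic_sq[of n s] c
    by (intro add_right_mono mult_left_mono) (simp_all add: G_def)
  also have "(1 / (2 * c)) * (G\<^sup>2 + 4 * real n * G) = G / 2"
    using c by (simp add: c_def field_simps power2_eq_square)
  finally have "G \<le> c * killed_mean (\<lambda>_. 1) n s" by simp
  then show ?thesis using c by (simp add: G_def c_def field_simps)
qed

lemma measurable_survival_shift2:
  "(\<lambda>\<omega>. survival s (\<lambda>j. \<omega> (Suc (Suc j))) n) \<in> borel_measurable noise_space"
  using measurable_compose[OF measurable_noise_shift
      measurable_compose[OF measurable_noise_shift measurable_survival]] .

lemma nn_integral_survival_shift2:
  "(\<integral>\<^sup>+\<omega>. survival s (\<lambda>j. \<omega> (Suc (Suc j))) n \<partial>noise_space) = ennreal (killed_mean (\<lambda>_. 1) n s)"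
proof -
  have "(\<lambda>\<omega>. survival s (\<lambda>j. \<omega> (Suc j)) n) \<in> borel_measurable noise_space"
    using measurable_compose[OF measurable_noise_shift measurable_survival] .
  from nn_integral_noise_space_shift[OF this]
  have "(\<integral>\<^sup>+\<omega>. survival s (\<lambda>j. \<omega> (Suc (Suc j))) n \<partial>noise_space) =
      (\<integral>\<^sup>+\<omega>. survival s (\<lambda>j. \<omega> (Suc j)) n \<partial>noise_space)" .
  also have "\<dots> = (\<integral>\<^sup>+\<omega>. survival s \<omega> n \<partial>noise_space)"
    by (rule nn_integral_noise_space_shift[OF measurable_survival])
  finally show ?thesis by (simp add: nn_integral_survival)
qed

lemma suminf_survival_le_absorption_time:
  "(\<Sum>n. survival (1, 1) (\<lambda>j. \<omega> (Suc (Suc j))) n) \<le> absorption_time \<omega>"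
proof (cases "\<exists>t>1. absorbed (leaky_urn \<omega> t)")
  case False
  then show ?thesis by (auto simp: absorption_time_def absorbed_def)
next
  case True
  define \<tau> where "\<tau> = (LEAST t. 1 < t \<and> absorbed (leaky_urn \<omega> t))"
  have \<tau>: "1 < \<tau>" "absorbed (leaky_urn \<omega> \<tau>)"
    using LeastI_ex[OF True] by (simp_all add: \<tau>_def)
  have "absorption_time \<omega> = of_nat \<tau>"
    using True by (simp add: absorption_time_def absorbed_def \<tau>_def)
  have "survival (1, 1) (\<lambda>j. \<omega> (Suc (Suc j))) n = 0" if "\<tau> - 2 \<le> n" for n
  proof -
    have "Suc (Suc (\<tau> - 2)) = \<tau>" using \<tau>(1) by simp
    then have "absorbed (urn_path (1, 1) (\<lambda>j. \<omega> (Suc (Suc j))) (\<tau> - 2))"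
      using \<tau>(2) leaky_urn_eq_urn_path[of \<omega> "\<tau> - 2"] by simp
    then show ?thesis using that by (auto simp: survival_def)
  qed
  then have "(\<Sum>n. survival (1, 1) (\<lambda>j. \<omega> (Suc (Suc j))) n) =
      (\<Sum>n<\<tau> - 2. survival (1, 1) (\<lambda>j. \<omega> (Suc (Suc j))) n)"
    by (intro suminf_finite) auto
  also have "\<dots> \<le> (\<Sum>n<\<tau> - 2. 1)"
    by (intro sum_mono) (simp add: survival_def)
  also have "\<dots> \<le> absorption_time \<omega>"
    using \<open>absorption_time \<omega> = of_nat \<tau>\<close> by simp
  finally show ?thesis .
qed

lemma not_summable_inverse_odd: "\<not> summable (\<lambda>n. 1 / (1 + 2 * real n))"
proof
  assume "summable (\<lambda>n. 1 / (1 + 2 * real n))"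
  then have "summable (\<lambda>n. 2 * (1 / (1 + 2 * real n)))" by (rule summable_mult)
  then have "summable (\<lambda>n. inverse (real (Suc n)))"
    by (rule summable_comparison_test') (auto simp: field_simps)
  then have "summable (\<lambda>n. inverse (real n))" by (subst summable_Suc_iff[symmetric])
  then show False using not_summable_harmonic by blast
qed

lemma killed_mean_one_from_1_1_ge: "1 / (1 + 2 * real n) \<le> killed_mean (\<lambda>_. 1) n (1, 1)"
proof -
  have "urn_harmonic (1, 1) / (urn_harmonic (1, 1) + 4 * real n) = 1 / (1 + 2 * real n)"
    by (simp add: urn_harmonic_def field_simps)
  then show ?thesis using killed_mean_one_ge[of "(1, 1)" n] by simp
qed

theorem corollary3p8:
  shows "(\<integral>\<^sup>+ \<omega>. absorption_time \<omega> \<partial>noise_space) = \<infinity>"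
proof -
  have "(\<Sum>n. ennreal (1 / (1 + 2 * real n))) = top"
    by (rule summable_iff_suminf_neq_top[OF _ not_summable_inverse_odd]) simp
  then have "top \<le> (\<Sum>n. ennreal (1 / (1 + 2 * real n)))" by simp
  also have "\<dots> \<le> (\<Sum>n. ennreal (killed_mean (\<lambda>_. 1) n (1, 1)))"
    by (intro suminf_le ennreal_leI summableI killed_mean_one_from_1_1_ge)
  also have "\<dots> = (\<Sum>n. \<integral>\<^sup>+\<omega>. survival (1, 1) (\<lambda>j. \<omega> (Suc (Suc j))) n \<partial>noise_space)"
    by (simp only: nn_integral_survival_shift2)
  also have "\<dots> = (\<integral>\<^sup>+\<omega>. (\<Sum>n. survival (1, 1) (\<lambda>j. \<omega> (Suc (Suc j))) n) \<partial>noise_space)"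
    by (rule nn_integral_suminf[symmetric]) (rule measurable_survival_shift2)
  also have "\<dots> \<le> (\<integral>\<^sup>+\<omega>. absorption_time \<omega> \<partial>noise_space)"
    by (intro nn_integral_mono suminf_survival_le_absorption_time)
  finally show ?thesis by (simp add: top_unique)
qed

end
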